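(* Let $L_{\mathcal{F}}$ and $L_{\mathcal{R}}$ be Lipschitz constants of $\mathcal{F}$ and $\mathcal{R}$ over $\Omega_\theta$, and suppose $\beta>L_{\mathcal{F}}+L_{\mathcal{R}}$. If $\bar z\in\Omega_\theta$ is a local minimizer of problem (R) or of problem (LRP), then $\bar z$ is also a local minimizer of problem (RP). If $\bar z\in\Omega_\theta\cap\Omega_3$ is a local minimizer of problem (RP), then $\bar z$ is also a local minimizer of problem (LRP).
   Context: Let $N,N_0,N_1$ be positive integers, $X=(x_1,\ldots,x_N)\in\mathbb{R}^{N_0\times N}$ a given data matrix, and $\lambda_1,\lambda_2,\beta>0$ given parameters. For a real vector $y$, $(y)_+=\max\{y,0\}$ componentwise; $e$ denotes the all-ones vector of $\mathbb{R}^{N_1}$. For a matrix $Y$, $\|Y\|_F$ is the Frobenius norm and $\|Y\|_1$ the maximum absolute column sum. The variable is $z=(\mathrm{vec}(W)^\top,b^\top,\mathrm{vec}(V)^\top)^\top\in\mathbb{R}^{N_2}$, $N_2=N_0N_1+N_1+N_0+N_1N$, where $W\in\mathbb{R}^{N_1\times N_0}$, $b=(b_1^\top,b_2^\top)^\top$ with $b_1\in\mathbb{R}^{N_1}$, $b_2\in\mathbb{R}^{N_0}$, $V=(v_1,\ldots,v_N)\in\mathbb{R}^{N_1\times N}$, and vec is columnwise vectorization. Define $\mathcal{F}(z)=\frac1N\sum_{n=1}^N\|(W^\top v_n+b_2)_+-x_n\|_2^2$, $\mathcal{R}(z)=\lambda_1\sum_{n=1}^N e^\top v_n+\lambda_2\|W\|_F^2$,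 $\mathcal{P}(z)=\beta\sum_{n=1}^N e^\top(v_n-(Wx_n+b_1)_+)$, and $\mathcal{O}=\mathcal{F}+\mathcal{R}+\mathcal{P}$. Let $\Omega_1=\{z: v_n=(Wx_n+b_1)_+,\ n=1,\ldots,N\}$, $\Omega_2=\{z: v_n\ge (Wx_n+b_1)_+,\ n=1,\ldots,N\}$. Fix $\theta>\frac1N\|X\|_F^2$ and set $\alpha=\max\left\{\frac{\theta}{\lambda_1}+\sqrt{\frac{N_1N_0\theta}{\lambda_2}}\|X\|_1,\ \frac{\theta\sqrt{N_1N_0\theta}}{\lambda_1\sqrt{\lambda_2}}+\sqrt{N\theta}+\|X\|_1\right\}$. Let $\Omega_3=\{z:\|b\|_\infty\le\alpha\}$, $\mathcal{Z}=\Omega_2\cap\Omega_3$, $\Omega_\theta=\{z\in\Omega_2:\mathcal{O}(z)\le\theta\}$. Problem (R): minimize $\mathcal{F}(z)+\mathcal{R}(z)$ subject to $z\in\Omega_1$. Problem (RP): minimize $\mathcal{O}(z)$ subject to $z\in\Omega_2$. Problem (LRP): minimize $\mathcal{O}(z)$ subject to $z\in\mathcal{Z}$. *)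

theory Defs
  imports "HOL-Analysis.Analysis"
begin

text \<open>The variable z = (vec W, b, vec V) is represented as an element of the
Euclidean product space (W, (b1, b2), V), with W :: real^'n0^'n1 (an N1 x N0 matrix),
b1 :: real^'n1, b2 :: real^'n0, V :: real^'n^'n1 (an N1 x N matrix whose columns are v_n).
The norm of this product type is the Euclidean norm of the stacked vector z.
The data matrix X :: real^'n^'n0 has columns x_n; N = CARD('n), N0 = CARD('n0), N1 = CARD('n1).\<close>

type_synonym ('n0, 'n1, 'n) var =
  "(real^'n0^'n1) \<times> ((real^'n1) \<times> (real^'n0)) \<times> (real^'n^'n1)"

definition zW :: "('n0::finite, 'n1::finite, 'n::finite) var \<Rightarrow> real^'n0^'n1" where
  "zW z = fst z"
definition zb1 :: "('n0::finite, 'n1::finite, 'n::finite) var \<Rightarrow> real^'n1" where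
  "zb1 z = fst (fst (snd z))"
definition zb2 :: "('n0::finite, 'n1::finite, 'n::finite) var \<Rightarrow> real^'n0" where
  "zb2 z = snd (fst (snd z))"
definition zV :: "('n0::finite, 'n1::finite, 'n::finite) var \<Rightarrow> real^'n^'n1" where
  "zV z = snd (snd z)"

definition col :: "real^'c^'r \<Rightarrow> 'c \<Rightarrow> real^'r" where
  "col M j = (\<chi> i. M $ i $ j)"

definition pos :: "real^'r \<Rightarrow> real^'r" where
  "pos y = (\<chi> i. max (y $ i) 0)"

definition frob :: "real^'c^'r::finite \<Rightarrow> real" where
  "frob M = sqrt (\<Sum>i\<in>UNIV. \<Sum>j\<in>UNIV. (M $ i $ j)\<^sup>2)"

definition norm1 :: "real^'c::finite^'r::finite \<Rightarrow> real" where
  "norm1 M = Max (range (\<lambda>j. \<Sum>i\<in>UNIV. \<bar>M $ i $ j\<bar>))"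

definition binf :: "('n0::finite, 'n1::finite, 'n::finite) var \<Rightarrow> real" where
  "binf z = max (Max (range (\<lambda>i. \<bar>zb1 z $ i\<bar>))) (Max (range (\<lambda>i. \<bar>zb2 z $ i\<bar>)))"

definition Ffun :: "real^'n::finite^'n0::finite \<Rightarrow> ('n0, 'n1::finite, 'n) var \<Rightarrow> real" where
  "Ffun X z = (1 / real CARD('n)) *
     (\<Sum>n\<in>UNIV. (norm (pos (transpose (zW z) *v col (zV z) n + zb2 z) - col X n))\<^sup>2)"

definition Rfun :: "real \<Rightarrow> real \<Rightarrow> ('n0::finite, 'n1::finite, 'n::finite) var \<Rightarrow> real" where
  "Rfun lam1 lam2 z = lam1 * (\<Sum>n\<in>UNIV. \<Sum>i\<in>UNIV. col (zV z) n $ i) + lam2 * (frob (zW z))\<^sup>2"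

definition Pfun :: "real^'n::finite^'n0::finite \<Rightarrow> real \<Rightarrow> ('n0, 'n1::finite, 'n) var \<Rightarrow> real" where
  "Pfun X beta z = beta * (\<Sum>n\<in>UNIV. \<Sum>i\<in>UNIV.
      (col (zV z) n - pos (zW z *v col X n + zb1 z)) $ i)"

definition Ofun :: "real^'n::finite^'n0::finite \<Rightarrow> real \<Rightarrow> real \<Rightarrow> real \<Rightarrow> ('n0, 'n1::finite, 'n) var \<Rightarrow> real" where
  "Ofun X lam1 lam2 beta z = Ffun X z + Rfun lam1 lam2 z + Pfun X beta z"

definition Omega1 :: "real^'n::finite^'n0::finite \<Rightarrow> ('n0, 'n1::finite, 'n) var set" where
  "Omega1 X = {z. \<forall>n. col (zV z) n = pos (zW z *v col X n + zb1 z)}"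

definition Omega2 :: "real^'n::finite^'n0::finite \<Rightarrow> ('n0, 'n1::finite, 'n) var set" where
  "Omega2 X = {z. \<forall>n i. col (zV z) n $ i \<ge> pos (zW z *v col X n + zb1 z) $ i}"

definition Omega3 :: "real \<Rightarrow> ('n0::finite, 'n1::finite, 'n::finite) var set" where
  "Omega3 alpha = {z. binf z \<le> alpha}"

definition Omega_theta :: "real^'n::finite^'n0::finite \<Rightarrow> real \<Rightarrow> real \<Rightarrow> real \<Rightarrow> real
    \<Rightarrow> ('n0, 'n1::finite, 'n) var set" where
  "Omega_theta X lam1 lam2 beta theta = {z \<in> Omega2 X. Ofun X lam1 lam2 beta z \<le> theta}"

definition local_minimizer :: "('a::metric_space \<Rightarrow> real) \<Rightarrow> 'a set \<Rightarrow> 'a \<Rightarrow> bool" where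
  "local_minimizer f S x \<longleftrightarrow> x \<in> S \<and> (\<exists>e>0. \<forall>y\<in>S. dist y x < e \<longrightarrow> f x \<le> f y)"

end

theory Submission
  imports Defs
begin

text \<open>Both implications towards (RP) come from continuous maps that fix the points of the
smaller feasible set and send every point of \<open>\<Omega>\<^sub>2\<close> below level \<open>\<theta>\<close> into that set
without increasing the objective. For (R), replace \<open>V\<close> by \<open>(W x\<^sub>n + b\<^sub>1)\<^sub>+\<close>: along the
segment towards that point the penalty \<open>\<P>\<close> drops at rate \<open>\<beta>\<close> times the \<open>\<ell>\<^sub>1\<close>-excess of \<open>V\<close>,
which dominates the distance travelled, while \<open>\<F> + \<R>\<close> grows at rate at most \<open>L\<^sub>\<F> + L\<^sub>\<R>\<close> as
long as the segment stays in \<open>\<Omega>\<^sub>\<theta>\<close>; by continuity it never leaves \<open>\<Omega>\<^sub>\<theta>\<close>. For (LRP), clamp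
\<open>b\<close> from below at \<open>-\<alpha>\<close>: on \<open>\<Omega>\<^sub>\<theta>\<close> the entries of \<open>W x\<^sub>n\<close> and \<open>W\<^sup>T v\<^sub>n\<close> are at most
\<open>\<alpha>\<close>, so the clamp changes no positive part, and the bound \<open>\<O> \<le> \<theta>\<close> also forces \<open>b \<le> \<alpha>\<close>.\<close>

lemma local_minimizer_transfer:
  fixes p :: "'a::metric_space \<Rightarrow> 'a"
  assumes min: "local_minimizer g S x" and "x \<in> T"
    and cont: "isCont p x" and fixed: "p x = x"
    and "f x \<le> g x" and "f x \<le> c"
    and descent: "\<And>y. y \<in> T \<Longrightarrow> f y < c \<Longrightarrow> p y \<in> S \<and> g (p y) \<le> f y"
  shows "local_minimizer f T x"
proof -
  obtain e where "e > 0" and e: "\<And>y. y \<in> S \<Longrightarrow> dist y x < e \<Longrightarrow> g x \<le> g y"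
    using min unfolding local_minimizer_def by blast
  obtain d where "d > 0" and d: "\<And>y. dist y x < d \<Longrightarrow> dist (p y) x < e"
    using cont \<open>e > 0\<close> fixed unfolding continuous_at_eps_delta by metis
  have "f x \<le> f y" if "y \<in> T" "dist y x < d" for y
  proof (cases "f y < c")
    case True
    then have "p y \<in> S" "g (p y) \<le> f y" using descent \<open>y \<in> T\<close> by auto
    then show ?thesis using e[of "p y"] d[OF \<open>dist y x < d\<close>] \<open>f x \<le> g x\<close> by auto
  qed (use \<open>f x \<le> c\<close> in auto)
  then show ?thesis unfolding local_minimizer_def using \<open>x \<in> T\<close> \<open>d > 0\<close> by blast
qed

lemma continuous_le_endpoint_if_sublevel:
  fixes h :: "real \<Rightarrow> real"
  assumes cont: "continuous_on {a..b} h" and "h b < c"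
    and sublevel: "\<And>t. t \<in> {a..b} \<Longrightarrow> h t \<le> c \<Longrightarrow> h t \<le> h b"
    and s: "s \<in> {a..b}"
  shows "h s \<le> h b"
proof (rule ccontr)
  assume "\<not> h s \<le> h b"
  then have "c < h s" using sublevel s by force
  define m where "m = (h b + c) / 2"
  have "h b < m" "m < c" using \<open>h b < c\<close> by (auto simp: m_def)
  obtain t where "s \<le> t" "t \<le> b" "h t = m"
    using IVT2'[of h b m s] \<open>h b < m\<close> \<open>m < c\<close> \<open>c < h s\<close> s
      continuous_on_subset[OF cont, of "{s..b}"] by force
  then show False using sublevel[of t] s \<open>h b < m\<close> \<open>m < c\<close> by auto
qed

lemma abs_entry_le_frob: "\<bar>M $ i $ j\<bar> \<le> frob M"
proof -
  have "(M $ i $ j)\<^sup>2 \<le> (\<Sum>j\<in>UNIV. (M $ i $ j)\<^sup>2)"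
    by (rule member_le_sum) auto
  also have "\<dots> \<le> (\<Sum>i\<in>UNIV. \<Sum>j\<in>UNIV. (M $ i $ j)\<^sup>2)"
    by (rule member_le_sum) (auto intro: sum_nonneg)
  finally show ?thesis
    unfolding frob_def by (metis real_sqrt_abs real_sqrt_le_mono)
qed

lemma sum_abs_col_le_norm1: "(\<Sum>i\<in>UNIV. \<bar>M $ i $ j\<bar>) \<le> norm1 M"
  unfolding norm1_def by (rule Max_ge) auto

lemma abs_entry_le_norm1: "\<bar>M $ i $ j\<bar> \<le> norm1 M"
  using member_le_sum[of i UNIV "\<lambda>i. \<bar>M $ i $ j\<bar>"] sum_abs_col_le_norm1[of M j] by auto

lemma norm1_nonneg: "0 \<le> norm1 M"
  using abs_entry_le_norm1 abs_ge_zero order_trans by blast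

lemma norm_le_sum_abs_entries:
  "norm (M :: real^'c::finite^'r::finite) \<le> (\<Sum>i\<in>UNIV. \<Sum>j\<in>UNIV. \<bar>M $ i $ j\<bar>)"
proof -
  have "norm M \<le> (\<Sum>i\<in>UNIV. norm (M $ i))"
    unfolding norm_vec_def by (rule L2_set_le_sum) auto
  also have "\<dots> \<le> (\<Sum>i\<in>UNIV. \<Sum>j\<in>UNIV. \<bar>M $ i $ j\<bar>)"
    by (intro sum_mono) (metis real_norm_def norm_le_l1_cart)
  finally show ?thesis .
qed

lemma abs_matrix_vector_mult_le:
  fixes M :: "real^'c::finite^'r::finite"
  assumes "\<And>j. \<bar>M $ i $ j\<bar> \<le> w"
  shows "\<bar>(M *v x) $ i\<bar> \<le> w * (\<Sum>j\<in>UNIV. \<bar>x $ j\<bar>)"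
proof -
  have "\<bar>(M *v x) $ i\<bar> \<le> (\<Sum>j\<in>UNIV. \<bar>M $ i $ j\<bar> * \<bar>x $ j\<bar>)"
    unfolding matrix_vector_mult_def by (simp add: abs_mult order_trans[OF sum_abs])
  also have "\<dots> \<le> (\<Sum>j\<in>UNIV. w * \<bar>x $ j\<bar>)"
    by (intro sum_mono mult_right_mono assms) auto
  finally show ?thesis by (simp add: sum_distrib_left)
qed

lemma col_nth [simp]: "col M n $ i = M $ i $ n"
  by (simp add: col_def)

lemma pos_nth [simp]: "pos y $ i = max (y $ i) 0"
  by (simp add: pos_def)

lemma continuous_on_pos [continuous_intros]:
  "continuous_on S f \<Longrightarrow> continuous_on S (\<lambda>x. pos (f x))"
  unfolding pos_def by (intro continuous_intros)

lemma continuous_on_col [continuous_intros]: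
  "continuous_on S f \<Longrightarrow> continuous_on S (\<lambda>x. col (f x) n)"
  unfolding col_def by (intro continuous_intros)

lemma continuous_on_matrix_vector_mult [continuous_intros]:
  "continuous_on S f \<Longrightarrow> continuous_on S g \<Longrightarrow> continuous_on S (\<lambda>x. (f x :: real^'a^'b) *v g x)"
  unfolding matrix_vector_mult_def by (intro continuous_intros)

lemma continuous_on_transpose [continuous_intros]:
  "continuous_on S f \<Longrightarrow> continuous_on S (\<lambda>x. transpose (f x :: real^'a^'b))"
  unfolding transpose_def by (intro continuous_intros)

lemma continuous_on_frob [continuous_intros]:
  "continuous_on S f \<Longrightarrow> continuous_on S (\<lambda>x. frob (f x :: real^'a^'b::finite))"
  unfolding frob_def by (intro continuous_intros)

lemma var_components [simp]:
  "zW (W, (b1, b2), V) = W" "zb1 (W, (b1, b2), V) = b1"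
  "zb2 (W, (b1, b2), V) = b2" "zV (W, (b1, b2), V) = V"
  by (simp_all add: zW_def zb1_def zb2_def zV_def)

lemma var_eta: "(zW z, (zb1 z, zb2 z), zV z) = z"
  by (simp add: zW_def zb1_def zb2_def zV_def)

lemma continuous_on_Ofun:
  "continuous_on S (Ofun X lam1 lam2 beta :: ('n0::finite, 'n1::finite, 'n::finite) var \<Rightarrow> real)"
  unfolding Ofun_def Ffun_def Rfun_def Pfun_def zW_def zV_def zb1_def zb2_def
  by (intro continuous_intros)

lemma Ffun_nonneg: "0 \<le> Ffun X z"
  unfolding Ffun_def by (intro mult_nonneg_nonneg sum_nonneg) auto

lemma abs_residual_le_sqrt_Ffun:
  fixes X :: "real^'n::finite^'n0::finite" and z :: "('n0, 'n1::finite, 'n) var"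
  shows "\<bar>(pos (transpose (zW z) *v col (zV z) n + zb2 z) - col X n) $ j\<bar>
           \<le> sqrt (real CARD('n) * Ffun X z)"
proof -
  let ?r = "\<lambda>n. pos (transpose (zW z) *v col (zV z) n + zb2 z) - col X n"
  have "(?r n $ j)\<^sup>2 \<le> (norm (?r n))\<^sup>2"
    by (metis abs_ge_zero component_le_norm_cart power2_abs power_mono)
  also have "\<dots> \<le> (\<Sum>n\<in>UNIV. (norm (?r n))\<^sup>2)"
    by (rule member_le_sum) auto
  also have "\<dots> = real CARD('n) * Ffun X z"
    by (simp add: Ffun_def)
  finally show ?thesis by (metis real_sqrt_abs real_sqrt_le_mono)
qed

definition hidden :: "real^'n::finite^'n0::finite \<Rightarrow> ('n0, 'n1::finite, 'n) var \<Rightarrow> real^'n^'n1" where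
  "hidden X z = (\<chi> i n. pos (zW z *v col X n + zb1 z) $ i)"

definition interp_hidden ::
    "real^'n::finite^'n0::finite \<Rightarrow> ('n0, 'n1::finite, 'n) var \<Rightarrow> real \<Rightarrow> ('n0, 'n1, 'n) var" where
  "interp_hidden X z s = (zW z, (zb1 z, zb2 z), hidden X z + s *\<^sub>R (zV z - hidden X z))"

lemma hidden_nonneg: "0 \<le> hidden X z $ i $ n"
  by (simp add: hidden_def)

lemma Omega1_iff_hidden: "z \<in> Omega1 X \<longleftrightarrow> zV z = hidden X z"
  by (auto simp: Omega1_def hidden_def vec_eq_iff)

lemma Omega2_iff_hidden: "z \<in> Omega2 X \<longleftrightarrow> (\<forall>n i. hidden X z $ i $ n \<le> zV z $ i $ n)"
  by (simp add: Omega2_def hidden_def)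

lemma Omega2_V_nonneg: "z \<in> Omega2 X \<Longrightarrow> 0 \<le> zV z $ i $ n"
  using hidden_nonneg order_trans unfolding Omega2_iff_hidden by blast

lemma Pfun_eq_sum_excess:
  "Pfun X beta z = beta * (\<Sum>n\<in>UNIV. \<Sum>i\<in>UNIV. zV z $ i $ n - hidden X z $ i $ n)"
  by (simp add: Pfun_def hidden_def)

lemma Pfun_nonneg: "z \<in> Omega2 X \<Longrightarrow> 0 \<le> beta \<Longrightarrow> 0 \<le> Pfun X beta z"
  unfolding Pfun_eq_sum_excess Omega2_iff_hidden by (auto intro!: mult_nonneg_nonneg sum_nonneg)

lemma Pfun_scale: "Pfun X beta z = beta * Pfun X 1 z"
  by (simp add: Pfun_def)

lemma interp_hidden_components [simp]:
  "zW (interp_hidden X z s) = zW z" "zb1 (interp_hidden X z s) = zb1 z"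
  "zb2 (interp_hidden X z s) = zb2 z"
  "zV (interp_hidden X z s) = hidden X z + s *\<^sub>R (zV z - hidden X z)"
  by (simp_all add: interp_hidden_def)

lemma hidden_interp_hidden [simp]: "hidden X (interp_hidden X z s) = hidden X z"
  by (simp add: hidden_def)

lemma interp_hidden_1: "interp_hidden X z 1 = z"
  by (simp add: interp_hidden_def var_eta)

lemma interp_hidden_0_Omega1: "interp_hidden X z 0 \<in> Omega1 X"
  by (simp add: Omega1_iff_hidden)

lemma interp_hidden_0_fixes_Omega1: "z \<in> Omega1 X \<Longrightarrow> interp_hidden X z 0 = z"
  by (simp add: interp_hidden_def Omega1_iff_hidden) (metis var_eta)

lemma interp_hidden_Omega2: "z \<in> Omega2 X \<Longrightarrow> 0 \<le> s \<Longrightarrow> interp_hidden X z s \<in> Omega2 X"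
  by (auto simp: Omega2_iff_hidden)

lemma Pfun_interp_hidden: "Pfun X beta (interp_hidden X z s) = s * Pfun X beta z"
  by (simp add: Pfun_eq_sum_excess sum_distrib_left algebra_simps)

lemma dist_interp_hidden:
  assumes "z \<in> Omega2 X" "s \<le> 1"
  shows "dist (interp_hidden X z s) z \<le> (1 - s) * Pfun X 1 z"
proof -
  have "interp_hidden X z s - z = (0, 0, (s - 1) *\<^sub>R (zV z - hidden X z))"
    by (cases z) (auto simp: interp_hidden_def algebra_simps)
  then have "dist (interp_hidden X z s) z = (1 - s) * norm (zV z - hidden X z)"
    using assms(2) by (simp add: dist_norm)
  also have "\<dots> \<le> (1 - s) * (\<Sum>i\<in>UNIV. \<Sum>n\<in>UNIV. \<bar>(zV z - hidden X z) $ i $ n\<bar>)"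
    using assms(2) by (intro mult_left_mono norm_le_sum_abs_entries) auto
  also have "(\<Sum>i\<in>UNIV. \<Sum>n\<in>UNIV. \<bar>(zV z - hidden X z) $ i $ n\<bar>) = Pfun X 1 z"
    using assms(1) by (subst sum.swap) (simp add: Pfun_eq_sum_excess Omega2_iff_hidden)
  finally show ?thesis .
qed

lemma continuous_on_interp_hidden_param:
  "continuous_on S (interp_hidden X z)"
  unfolding interp_hidden_def by (intro continuous_intros)

lemma isCont_interp_hidden_0:
  "isCont (\<lambda>z. interp_hidden X z 0 :: ('n0::finite, 'n1::finite, 'n::finite) var) x"
proof -
  have "continuous_on UNIV (\<lambda>z. interp_hidden X z 0 :: ('n0, 'n1, 'n) var)"
    unfolding interp_hidden_def hidden_def zW_def zb1_def zb2_def zV_def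
    by (intro continuous_intros)
  then show ?thesis using continuous_on_eq_continuous_at open_UNIV by blast
qed

context
  fixes X :: "real^'n::finite^'n0::finite" and lam1 lam2 beta theta LF LR :: real
  assumes LF: "LF-lipschitz_on (Omega_theta X lam1 lam2 beta theta :: ('n0, 'n1::finite, 'n) var set) (Ffun X)"
    and LR: "LR-lipschitz_on (Omega_theta X lam1 lam2 beta theta :: ('n0, 'n1, 'n) var set) (Rfun lam1 lam2)"
    and beta: "LF + LR \<le> beta"
begin

text \<open>This is where \<open>\<beta> \<ge> L\<^sub>\<F> + L\<^sub>\<R>\<close> enters; the Lipschitz bounds are only available
while the segment stays in \<open>\<Omega>\<^sub>\<theta>\<close>.\<close>

lemma Ofun_interp_hidden_le_if_Omega_theta:
  fixes z :: "('n0, 'n1, 'n) var"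
  assumes z: "z \<in> Omega_theta X lam1 lam2 beta theta"
    and zs: "interp_hidden X z s \<in> Omega_theta X lam1 lam2 beta theta"
    and "s \<le> 1"
  shows "Ofun X lam1 lam2 beta (interp_hidden X z s) \<le> Ofun X lam1 lam2 beta z"
proof -
  let ?zs = "interp_hidden X z s" and ?D = "Pfun X 1 z"
  have "z \<in> Omega2 X" using z by (simp add: Omega_theta_def)
  then have D: "0 \<le> ?D" and dist: "dist ?zs z \<le> (1 - s) * ?D"
    using Pfun_nonneg[of z X 1] dist_interp_hidden[of z X s] \<open>s \<le> 1\<close> by auto
  have "\<bar>Ffun X ?zs - Ffun X z\<bar> \<le> LF * ((1 - s) * ?D)"
    using lipschitz_onD[OF LF zs z] lipschitz_on_nonneg[OF LF] dist
    by (simp add: dist_real_def order_trans mult_left_mono)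
  moreover have "\<bar>Rfun lam1 lam2 ?zs - Rfun lam1 lam2 z\<bar> \<le> LR * ((1 - s) * ?D)"
    using lipschitz_onD[OF LR zs z] lipschitz_on_nonneg[OF LR] dist
    by (simp add: dist_real_def order_trans mult_left_mono)
  moreover have "(LF + LR) * ((1 - s) * ?D) \<le> beta * ((1 - s) * ?D)"
    using beta \<open>s \<le> 1\<close> D by (intro mult_right_mono) auto
  moreover have "Pfun X beta ?zs = Pfun X beta z - beta * ((1 - s) * ?D)"
    by (simp add: Pfun_interp_hidden Pfun_scale[of X beta] algebra_simps)
  ultimately show ?thesis
    unfolding Ofun_def by (simp add: algebra_simps abs_le_iff)
qed

lemma Ofun_interp_hidden_0_le:
  fixes z :: "('n0, 'n1, 'n) var"
  assumes z: "z \<in> Omega2 X" and below: "Ofun X lam1 lam2 beta z < theta"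
  shows "Ofun X lam1 lam2 beta (interp_hidden X z 0) \<le> Ofun X lam1 lam2 beta z"
proof -
  let ?h = "\<lambda>s. Ofun X lam1 lam2 beta (interp_hidden X z s)"
  have zT: "z \<in> Omega_theta X lam1 lam2 beta theta"
    using z below by (simp add: Omega_theta_def)
  have "?h s \<le> ?h 1" if "s \<in> {0..1}" "?h s \<le> theta" for s
  proof -
    have "interp_hidden X z s \<in> Omega_theta X lam1 lam2 beta theta"
      using that interp_hidden_Omega2[OF z, of s] by (simp add: Omega_theta_def)
    then show ?thesis
      using Ofun_interp_hidden_le_if_Omega_theta[OF zT] that
      by (simp add: interp_hidden_1)
  qed
  moreover have "continuous_on {0..1} ?h"
    by (rule continuous_on_compose2[OF continuous_on_Ofun continuous_on_interp_hidden_param]) auto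
  ultimately show ?thesis
    using continuous_le_endpoint_if_sublevel[of 0 1 ?h theta 0] below
    by (simp add: interp_hidden_1)
qed

lemma local_minimizer_RP_if_R:
  fixes zb :: "('n0, 'n1, 'n) var"
  assumes zb: "zb \<in> Omega_theta X lam1 lam2 beta theta"
    and min: "local_minimizer (\<lambda>z. Ffun X z + Rfun lam1 lam2 z) (Omega1 X) zb"
  shows "local_minimizer (Ofun X lam1 lam2 beta) (Omega2 X) zb"
proof -
  have "zb \<in> Omega1 X" using min by (simp add: local_minimizer_def)
  show ?thesis
  proof (rule local_minimizer_transfer[where f = "Ofun X lam1 lam2 beta", OF min _ isCont_interp_hidden_0
        interp_hidden_0_fixes_Omega1[OF \<open>zb \<in> Omega1 X\<close>]])
    show "zb \<in> Omega2 X" "Ofun X lam1 lam2 beta zb \<le> theta"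
      using zb by (auto simp: Omega_theta_def)
    show "Ofun X lam1 lam2 beta zb \<le> Ffun X zb + Rfun lam1 lam2 zb"
      using \<open>zb \<in> Omega1 X\<close> by (simp add: Ofun_def Pfun_eq_sum_excess Omega1_iff_hidden)
    fix y :: "('n0, 'n1, 'n) var"
    assume "y \<in> Omega2 X" "Ofun X lam1 lam2 beta y < theta"
    then show "interp_hidden X y 0 \<in> Omega1 X \<and>
        Ffun X (interp_hidden X y 0) + Rfun lam1 lam2 (interp_hidden X y 0) \<le> Ofun X lam1 lam2 beta y"
      using interp_hidden_0_Omega1 Ofun_interp_hidden_0_le by (simp add: Ofun_def Pfun_interp_hidden)
  qed
qed

end

definition clamp_bias :: "real \<Rightarrow> ('n0::finite, 'n1::finite, 'n::finite) var \<Rightarrow> ('n0, 'n1, 'n) var" where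
  "clamp_bias a z = (zW z, ((\<chi> i. max (zb1 z $ i) (-a)), (\<chi> j. max (zb2 z $ j) (-a))), zV z)"

lemma clamp_bias_components [simp]:
  "zW (clamp_bias a z) = zW z" "zV (clamp_bias a z) = zV z"
  "zb1 (clamp_bias a z) = (\<chi> i. max (zb1 z $ i) (-a))"
  "zb2 (clamp_bias a z) = (\<chi> j. max (zb2 z $ j) (-a))"
  by (simp_all add: clamp_bias_def)

lemma Omega3_iff: "z \<in> Omega3 a \<longleftrightarrow> (\<forall>i. \<bar>zb1 z $ i\<bar> \<le> a) \<and> (\<forall>j. \<bar>zb2 z $ j\<bar> \<le> a)"
  by (simp add: Omega3_def binf_def)

lemma clamp_bias_eq_self:
  assumes "z \<in> Omega3 a"
  shows "clamp_bias a z = z"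
proof -
  have "-a \<le> zb1 z $ i" "-a \<le> zb2 z $ j" for i j
    using assms unfolding Omega3_iff abs_le_iff by (meson minus_le_iff)+
  then have "(\<chi> i. max (zb1 z $ i) (-a)) = zb1 z" "(\<chi> j. max (zb2 z $ j) (-a)) = zb2 z"
    by (simp_all add: vec_eq_iff max_absorb1)
  then show ?thesis by (simp add: clamp_bias_def var_eta)
qed

lemma isCont_clamp_bias: "isCont (clamp_bias a) z"
proof -
  have "continuous_on UNIV (clamp_bias a :: ('n0::finite, 'n1::finite, 'n::finite) var \<Rightarrow> _)"
    unfolding clamp_bias_def zW_def zb1_def zb2_def zV_def by (intro continuous_intros)
  then show ?thesis using continuous_on_eq_continuous_at open_UNIV by blast
qed

lemma clamp_bias_Omega3:
  assumes "0 \<le> a" "\<And>i. zb1 z $ i \<le> a" "\<And>j. zb2 z $ j \<le> a"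
  shows "clamp_bias a z \<in> Omega3 a"
  using assms by (auto simp: Omega3_iff abs_le_iff max_def)

lemma pos_add_clamp:
  assumes "\<And>i. y $ i \<le> a"
  shows "pos (y + (\<chi> i. max (b $ i) (-a))) = pos (y + b)"
proof -
  have "max (y $ i + max (b $ i) (-a)) 0 = max (y $ i + b $ i) 0" for i
    using assms[of i] by (auto simp: max_def)
  then show ?thesis by (simp add: vec_eq_iff)
qed

lemma hidden_clamp_bias:
  assumes "\<And>n i. (zW z *v col X n) $ i \<le> a"
  shows "hidden X (clamp_bias a z) = hidden X z"
  using assms by (simp add: hidden_def pos_add_clamp)

lemma Ffun_clamp_bias:
  assumes "\<And>n j. (transpose (zW z) *v col (zV z) n) $ j \<le> a"
  shows "Ffun X (clamp_bias a z) = Ffun X z"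
  using assms by (simp add: Ffun_def pos_add_clamp)

lemma Rfun_clamp_bias: "Rfun lam1 lam2 (clamp_bias a z) = Rfun lam1 lam2 z"
  by (simp add: Rfun_def)

context
  fixes X :: "real^'n::finite^'n0::finite" and z :: "('n0, 'n1::finite, 'n) var"
    and lam1 lam2 beta theta :: real
  assumes z: "z \<in> Omega_theta X lam1 lam2 beta theta"
    and lam1: "0 < lam1" and lam2: "0 < lam2" and beta: "0 \<le> beta"
begin

lemma Omega_theta_bounds:
  shows "0 \<le> theta"
    and "Ffun X z \<le> theta"
    and "(\<Sum>i\<in>UNIV. zV z $ i $ n) \<le> theta / lam1"
    and "\<bar>zW z $ i $ j\<bar> \<le> sqrt (theta / lam2)"
proof -
  let ?S = "\<Sum>n\<in>UNIV. \<Sum>i\<in>UNIV. zV z $ i $ n"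
  have z2: "z \<in> Omega2 X" and zO: "Ofun X lam1 lam2 beta z \<le> theta"
    using z by (auto simp: Omega_theta_def)
  have "0 \<le> Ffun X z" by (rule Ffun_nonneg)
  moreover have "0 \<le> Pfun X beta z" using Pfun_nonneg[OF z2 beta] .
  moreover have "0 \<le> lam1 * ?S" "0 \<le> lam2 * (frob (zW z))\<^sup>2"
    using lam1 lam2 Omega2_V_nonneg[OF z2] by (auto intro!: mult_nonneg_nonneg sum_nonneg)
  moreover have "Ofun X lam1 lam2 beta z = Ffun X z + lam1 * ?S + lam2 * (frob (zW z))\<^sup>2 + Pfun X beta z"
    by (simp add: Ofun_def Rfun_def)
  ultimately have F: "Ffun X z \<le> theta" and S: "lam1 * ?S \<le> theta" and W: "lam2 * (frob (zW z))\<^sup>2 \<le> theta"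
    using zO by linarith+
  show "0 \<le> theta" using F Ffun_nonneg[of X z] by linarith
  show "Ffun X z \<le> theta" by (fact F)
  have "(\<Sum>i\<in>UNIV. zV z $ i $ n) \<le> ?S"
    by (rule member_le_sum) (auto intro: sum_nonneg Omega2_V_nonneg[OF z2])
  then have "lam1 * (\<Sum>i\<in>UNIV. zV z $ i $ n) \<le> lam1 * ?S"
    using lam1 by (intro mult_left_mono) auto
  then have "lam1 * (\<Sum>i\<in>UNIV. zV z $ i $ n) \<le> theta"
    using S by linarith
  then show "(\<Sum>i\<in>UNIV. zV z $ i $ n) \<le> theta / lam1"
    using lam1 by (simp add: pos_le_divide_eq mult.commute)
  have "frob (zW z) \<le> sqrt (theta / lam2)"
    using W lam2 by (intro real_le_rsqrt) (simp add: pos_le_divide_eq mult.commute)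
  then show "\<bar>zW z $ i $ j\<bar> \<le> sqrt (theta / lam2)"
    using abs_entry_le_frob order_trans by blast
qed

lemma Omega_theta_matrix_vector_bounds:
  shows "\<bar>(zW z *v col X n) $ i\<bar> \<le> sqrt (theta / lam2) * norm1 X"
    and "\<bar>(transpose (zW z) *v col (zV z) n) $ j\<bar> \<le> sqrt (theta / lam2) * (theta / lam1)"
proof -
  have "\<bar>(zW z *v col X n) $ i\<bar> \<le> sqrt (theta / lam2) * (\<Sum>k\<in>UNIV. \<bar>X $ k $ n\<bar>)"
    using abs_matrix_vector_mult_le[where x = "col X n", OF Omega_theta_bounds(4)] by simp
  also have "\<dots> \<le> sqrt (theta / lam2) * norm1 X"
    using Omega_theta_bounds(1) lam2 by (intro mult_left_mono sum_abs_col_le_norm1) auto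
  finally show "\<bar>(zW z *v col X n) $ i\<bar> \<le> sqrt (theta / lam2) * norm1 X" .
  have z2: "z \<in> Omega2 X" using z by (simp add: Omega_theta_def)
  have "\<bar>transpose (zW z) $ j $ k\<bar> \<le> sqrt (theta / lam2)" for k
    using Omega_theta_bounds(4) by (simp add: transpose_def)
  then have "\<bar>(transpose (zW z) *v col (zV z) n) $ j\<bar> \<le> sqrt (theta / lam2) * (\<Sum>k\<in>UNIV. \<bar>zV z $ k $ n\<bar>)"
    using abs_matrix_vector_mult_le[of "transpose (zW z)" j _ "col (zV z) n"] by simp
  also have "\<dots> \<le> sqrt (theta / lam2) * (theta / lam1)"
    using Omega_theta_bounds(1,3) Omega2_V_nonneg[OF z2] lam2 by (intro mult_left_mono) auto
  finally show "\<bar>(transpose (zW z) *v col (zV z) n) $ j\<bar> \<le> sqrt (theta / lam2) * (theta / lam1)" .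
qed

lemma Omega_theta_bias_bounds:
  shows "zb1 z $ i \<le> theta / lam1 + sqrt (theta / lam2) * norm1 X"
    and "zb2 z $ j \<le> sqrt (theta / lam2) * (theta / lam1) + sqrt (real CARD('n) * theta) + norm1 X"
proof -
  fix n :: 'n
  have z2: "z \<in> Omega2 X" using z by (simp add: Omega_theta_def)
  have "(zW z *v col X n) $ i + zb1 z $ i \<le> zV z $ i $ n"
    using z2 by (simp add: Omega2_def)
  also have "\<dots> \<le> (\<Sum>k\<in>UNIV. zV z $ k $ n)"
    by (rule member_le_sum) (auto intro: Omega2_V_nonneg[OF z2])
  also have "\<dots> \<le> theta / lam1"
    by (rule Omega_theta_bounds(3))
  finally show "zb1 z $ i \<le> theta / lam1 + sqrt (theta / lam2) * norm1 X"
    using Omega_theta_matrix_vector_bounds(1)[of n i] by linarith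
  have "(transpose (zW z) *v col (zV z) n) $ j + zb2 z $ j - X $ j $ n
          \<le> \<bar>(pos (transpose (zW z) *v col (zV z) n + zb2 z) - col X n) $ j\<bar>"
    by simp
  also have "\<dots> \<le> sqrt (real CARD('n) * theta)"
    using Omega_theta_bounds(2)
    by (intro order_trans[OF abs_residual_le_sqrt_Ffun] real_sqrt_le_mono mult_left_mono) auto
  finally show "zb2 z $ j \<le> sqrt (theta / lam2) * (theta / lam1) + sqrt (real CARD('n) * theta) + norm1 X"
    using Omega_theta_matrix_vector_bounds(2)[of n j] abs_entry_le_norm1[of X j n] by linarith
qed

lemma clamp_bias_Omega_theta:
  assumes a1: "theta / lam1 + sqrt (theta / lam2) * norm1 X \<le> a"
    and a2: "sqrt (theta / lam2) * (theta / lam1) + sqrt (real CARD('n) * theta) + norm1 X \<le> a"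
  shows "clamp_bias a z \<in> Omega2 X \<inter> Omega3 a"
    and "Ofun X lam1 lam2 beta (clamp_bias a z) = Ofun X lam1 lam2 beta z"
proof -
  have "0 \<le> theta"
    by (rule Omega_theta_bounds(1))
  then have "0 \<le> theta / lam1" "0 \<le> sqrt (theta / lam2) * norm1 X"
    using lam1 lam2 norm1_nonneg[of X] by auto
  then have "0 \<le> a" using a1 by linarith
  have "(zW z *v col X n) $ i \<le> a" for n i
    using abs_le_D1[OF Omega_theta_matrix_vector_bounds(1)[of n i]] a1 \<open>0 \<le> theta / lam1\<close> by linarith
  then have hidden: "hidden X (clamp_bias a z) = hidden X z"
    by (rule hidden_clamp_bias)
  have "0 \<le> sqrt (real CARD('n) * theta)" using \<open>0 \<le> theta\<close> by simp
  then have "(transpose (zW z) *v col (zV z) n) $ j \<le> a" for n j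
    using abs_le_D1[OF Omega_theta_matrix_vector_bounds(2)[of n j]] a2 norm1_nonneg[of X] by linarith
  then have F: "Ffun X (clamp_bias a z) = Ffun X z"
    by (rule Ffun_clamp_bias)
  have "z \<in> Omega2 X" using z by (simp add: Omega_theta_def)
  then have "clamp_bias a z \<in> Omega2 X"
    using hidden by (simp add: Omega2_iff_hidden)
  moreover have "clamp_bias a z \<in> Omega3 a"
    by (rule clamp_bias_Omega3[OF \<open>0 \<le> a\<close> order_trans[OF Omega_theta_bias_bounds(1) a1]
          order_trans[OF Omega_theta_bias_bounds(2) a2]])
  ultimately show "clamp_bias a z \<in> Omega2 X \<inter> Omega3 a" by simp
  show "Ofun X lam1 lam2 beta (clamp_bias a z) = Ofun X lam1 lam2 beta z"
    using hidden F by (simp add: Ofun_def Rfun_clamp_bias Pfun_eq_sum_excess)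
qed

end

lemma local_minimizer_RP_if_LRP:
  fixes X :: "real^'n::finite^'n0::finite" and zb :: "('n0, 'n1::finite, 'n) var"
  assumes lam1: "0 < lam1" and lam2: "0 < lam2" and beta: "0 \<le> beta"
    and a1: "theta / lam1 + sqrt (theta / lam2) * norm1 X \<le> a"
    and a2: "sqrt (theta / lam2) * (theta / lam1) + sqrt (real CARD('n) * theta) + norm1 X \<le> a"
    and zb: "zb \<in> Omega_theta X lam1 lam2 beta theta"
    and min: "local_minimizer (Ofun X lam1 lam2 beta) (Omega2 X \<inter> Omega3 a) zb"
  shows "local_minimizer (Ofun X lam1 lam2 beta) (Omega2 X) zb"
proof -
  have "zb \<in> Omega3 a" using min by (simp add: local_minimizer_def)
  show ?thesis
  proof (rule local_minimizer_transfer[where f = "Ofun X lam1 lam2 beta", OF min _ isCont_clamp_bias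
        clamp_bias_eq_self[OF \<open>zb \<in> Omega3 a\<close>] order_refl])
    show "zb \<in> Omega2 X" "Ofun X lam1 lam2 beta zb \<le> theta"
      using zb by (auto simp: Omega_theta_def)
    fix y :: "('n0, 'n1, 'n) var"
    assume "y \<in> Omega2 X" "Ofun X lam1 lam2 beta y < theta"
    then have "y \<in> Omega_theta X lam1 lam2 beta theta" by (simp add: Omega_theta_def)
    from clamp_bias_Omega_theta[OF this lam1 lam2 beta a1 a2]
    show "clamp_bias a y \<in> Omega2 X \<inter> Omega3 a \<and>
        Ofun X lam1 lam2 beta (clamp_bias a y) \<le> Ofun X lam1 lam2 beta y"
      by simp
  qed
qed

text \<open>The factor \<open>N\<^sub>1 N\<^sub>0\<close> in \<open>\<alpha>\<close> is slack: the entrywise bound \<open>|W\<^sub>i\<^sub>j| \<le> \<parallel>W\<parallel>\<^sub>F\<close>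
already gives \<open>\<surd>(\<theta>/\<lambda>\<^sub>2)\<close>.\<close>

lemma alpha_ge_bias_bounds:
  fixes X :: "real^'n::finite^'n0::finite"
  assumes alpha: "alpha = max (theta / lam1 + sqrt (real CARD('n1::finite) * real CARD('n0) * theta / lam2) * norm1 X)
                          (theta * sqrt (real CARD('n1) * real CARD('n0) * theta) / (lam1 * sqrt lam2)
                             + sqrt (real CARD('n) * theta) + norm1 X)"
    and lam1: "0 < lam1" and lam2: "0 < lam2" and theta: "0 \<le> theta"
  shows "theta / lam1 + sqrt (theta / lam2) * norm1 X \<le> alpha"
    and "sqrt (theta / lam2) * (theta / lam1) + sqrt (real CARD('n) * theta) + norm1 X \<le> alpha"
proof -
  define w where "w = sqrt (real CARD('n1) * real CARD('n0) * theta / lam2)"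
  have "1 \<le> real CARD('n1)" "1 \<le> real CARD('n0)"
    by (simp_all add: Suc_le_eq)
  then have "1 \<le> real CARD('n1) * real CARD('n0)"
    using mult_mono[of 1 "real CARD('n1)" 1 "real CARD('n0)"] by simp
  then have "theta \<le> real CARD('n1) * real CARD('n0) * theta"
    using theta mult_right_mono[of 1 "real CARD('n1) * real CARD('n0)" theta] by simp
  then have w: "sqrt (theta / lam2) \<le> w"
    unfolding w_def using lam2 by (intro real_sqrt_le_mono divide_right_mono) auto
  have "theta * sqrt (real CARD('n1) * real CARD('n0) * theta) / (lam1 * sqrt lam2) = w * (theta / lam1)"
    unfolding w_def using lam2 by (simp add: real_sqrt_divide ac_simps)
  then have "theta / lam1 + w * norm1 X \<le> alpha" "w * (theta / lam1) + sqrt (real CARD('n) * theta) + norm1 X \<le> alpha"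
    unfolding alpha w_def by simp_all
  moreover have "sqrt (theta / lam2) * norm1 X \<le> w * norm1 X"
    using w norm1_nonneg by (rule mult_right_mono)
  moreover have "sqrt (theta / lam2) * (theta / lam1) \<le> w * (theta / lam1)"
    using w theta lam1 by (intro mult_right_mono) auto
  ultimately show "theta / lam1 + sqrt (theta / lam2) * norm1 X \<le> alpha"
    and "sqrt (theta / lam2) * (theta / lam1) + sqrt (real CARD('n) * theta) + norm1 X \<le> alpha"
    by linarith+
qed

theorem corollary2p1:
  fixes X :: "real^'n::finite^'n0::finite"
    and lam1 lam2 beta theta alpha LF LR :: real
  assumes lam1: "lam1 > 0" and lam2: "lam2 > 0" and beta: "beta > 0"
    and theta: "theta > (1 / real CARD('n)) * (frob X)\<^sup>2"
    and alpha: "alpha = max (theta / lam1 + sqrt (real CARD('n1::finite) * real CARD('n0) * theta / lam2) * norm1 X)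
                          (theta * sqrt (real CARD('n1) * real CARD('n0) * theta) / (lam1 * sqrt lam2)
                             + sqrt (real CARD('n) * theta) + norm1 X)"
    and LF: "LF-lipschitz_on (Omega_theta X lam1 lam2 beta theta :: ('n0, 'n1, 'n) var set) (Ffun X)"
    and LR: "LR-lipschitz_on (Omega_theta X lam1 lam2 beta theta :: ('n0, 'n1, 'n) var set) (Rfun lam1 lam2)"
    and beta_gt: "beta > LF + LR"
  shows "(\<forall>zb :: ('n0, 'n1, 'n) var \<in> Omega_theta X lam1 lam2 beta theta.
            (local_minimizer (\<lambda>z. Ffun X z + Rfun lam1 lam2 z) (Omega1 X) zb
             \<or> local_minimizer (Ofun X lam1 lam2 beta) (Omega2 X \<inter> Omega3 alpha) zb)
            \<longrightarrow> local_minimizer (Ofun X lam1 lam2 beta) (Omega2 X) zb)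
       \<and> (\<forall>zb :: ('n0, 'n1, 'n) var \<in> Omega_theta X lam1 lam2 beta theta \<inter> Omega3 alpha.
            local_minimizer (Ofun X lam1 lam2 beta) (Omega2 X) zb
            \<longrightarrow> local_minimizer (Ofun X lam1 lam2 beta) (Omega2 X \<inter> Omega3 alpha) zb)"
proof (intro conjI ballI impI)
  have "0 \<le> (1 / real CARD('n)) * (frob X)\<^sup>2" by simp
  then have "0 \<le> theta" using theta by linarith
  note bias_le = alpha_ge_bias_bounds[OF alpha lam1 lam2 this]
  have "LF + LR \<le> beta" using beta_gt by simp
  fix zb :: "('n0, 'n1, 'n) var"
  assume "zb \<in> Omega_theta X lam1 lam2 beta theta"
    and "local_minimizer (\<lambda>z. Ffun X z + Rfun lam1 lam2 z) (Omega1 X) zb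
      \<or> local_minimizer (Ofun X lam1 lam2 beta) (Omega2 X \<inter> Omega3 alpha) zb"
  then show "local_minimizer (Ofun X lam1 lam2 beta) (Omega2 X) zb"
    using local_minimizer_RP_if_R[OF LF LR \<open>LF + LR \<le> beta\<close>]
      local_minimizer_RP_if_LRP[OF lam1 lam2 less_imp_le[OF beta] bias_le]
    by blast
next
  fix zb :: "('n0, 'n1, 'n) var"
  assume "zb \<in> Omega_theta X lam1 lam2 beta theta \<inter> Omega3 alpha"
    and "local_minimizer (Ofun X lam1 lam2 beta) (Omega2 X) zb"
  then show "local_minimizer (Ofun X lam1 lam2 beta) (Omega2 X \<inter> Omega3 alpha) zb"
    unfolding local_minimizer_def by blast
qed

end
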